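(* Let $X\in\mathcal M_{\mathbf r}$ with minimal left-orthogonal TT decomposition $U_1,\dots,U_d$, and let $V\in\mathrm T_X\mathcal M_{\mathbf r}$ be given by cores $\delta V_1,\dots,\delta V_d$ with $V(i_1,\dots,i_d)=\sum_{k=1}^dU_1(i_1)\cdots U_{k-1}(i_{k-1})\delta V_k(i_k)U_{k+1}(i_{k+1})\cdots U_d(i_d)$ and $(\delta V_k^L)^\top U_k^L=0$ for $k\in[d-1]$. Then there exist $\epsilon>0$ and smooth curves $c_k:(-\epsilon,\epsilon)\to\mathbb R^{r_{k-1}\times n_k\times r_k}$ with $c_k(t)=U_k+t\,\delta V_k+O(t^2)$ for $k\in[d-1]$ and $c_d(t)=U_d+t\,\delta V_d$, such that, setting $c_{TT}(t):=M_{TT}(c_1(t),\dots,c_d(t))$, we have $c_{TT}(0)=X$, $c_{TT}'(0)=V$, and for every $t\in(-\epsilon,\epsilon)$ the cores $c_1(t),\dots,c_d(t)$ form a minimal left-orthogonal TT decomposition and $c_{TT}(t)\in\mathcal M_{\mathbf r}$.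
   Context: Fix $d\ge2$, positive integers $n_1,\dots,n_d$, $\mathbf r=(r_1,\dots,r_{d-1})$, $r_0=r_d=1$. For $Z\in\mathbb R^{n_1\times\cdots\times n_d}$, $Z^{<\mu>}$ is the $(n_1\cdots n_\mu)\times(n_{\mu+1}\cdots n_d)$ flattening (colexicographic order); $\mathrm{rank}_{TT}(Z)=(\mathrm{rank}\,Z^{<1>},\dots,\mathrm{rank}\,Z^{<d-1>})$; $\mathcal M_{\mathbf r}$ is the manifold of tensors of TT-rank $\mathbf r$. $M_{TT}(W_1,\dots,W_d)$ for cores $W_k\in\mathbb R^{r_{k-1}\times n_k\times r_k}$ is the tensor with entries $W_1(i_1)W_2(i_2)\cdots W_d(i_d)$, where $W_k(i)\in\mathbb R^{r_{k-1}\times r_k}$ is the slice with middle index $i$. A decomposition $W_1,\dots,W_d$ of $M_{TT}(W_1,\dots,W_d)$ is minimal if the TT-rank of that tensor is $\mathbf r$, and left-orthogonal if $(W_k^L)^\top W_k^L=I_{r_k}$ for $k\in[d-1]$, where $W^L:=W^{<2>}\in\mathbb R^{r_{k-1}n_k\times r_k}$. *)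

theory Defs
  imports "HOL-Analysis.Analysis" "HOL-Library.Landau_Symbols" "Jordan_Normal_Form.DL_Rank"
begin

text \<open>Indices are 0-based. A tensor in R^(n_1 x ... x n_d) is a function
 Z :: (nat => nat) => real on multi-indices i with i k < n k for k in {1..d}
 (values at other multi-indices are irrelevant). A TT core number k is a function
 W :: nat => nat => nat => real, W a i b = W_k(i)(a,b), a < r(k-1), i < n k, b < r k.
 A family of cores is Ws :: nat => (nat => nat => nat => real), indexed by k in {1..d}.\<close>

type_synonym tensor = "(nat \<Rightarrow> nat) \<Rightarrow> real"
type_synonym core = "nat \<Rightarrow> nat \<Rightarrow> nat \<Rightarrow> real"

definition valid_index :: "nat \<Rightarrow> (nat \<Rightarrow> nat) \<Rightarrow> (nat \<Rightarrow> nat) \<Rightarrow> bool" where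
  "valid_index d n i \<longleftrightarrow> (\<forall>k\<in>{1..d}. i k < n k)"

definition colex_index :: "(nat \<Rightarrow> nat) \<Rightarrow> nat \<Rightarrow> nat \<Rightarrow> nat \<Rightarrow> nat \<Rightarrow> nat" where
  "colex_index n \<mu> p q k =
     (if k \<le> \<mu> then (p div (\<Prod>j\<in>{1..<k}. n j)) mod n k
      else (q div (\<Prod>j\<in>{\<mu>+1..<k}. n j)) mod n k)"

definition flattening :: "nat \<Rightarrow> (nat \<Rightarrow> nat) \<Rightarrow> nat \<Rightarrow> tensor \<Rightarrow> real mat" where
  "flattening d n \<mu> Z =
     mat (\<Prod>j\<in>{1..\<mu>}. n j) (\<Prod>j\<in>{\<mu>+1..d}. n j) (\<lambda>(p, q). Z (colex_index n \<mu> p q))"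

definition mat_rank :: "real mat \<Rightarrow> nat" where
  "mat_rank A = vec_space.rank (dim_row A) A"

definition has_TT_rank :: "nat \<Rightarrow> (nat \<Rightarrow> nat) \<Rightarrow> (nat \<Rightarrow> nat) \<Rightarrow> tensor \<Rightarrow> bool" where
  "has_TT_rank d n r Z \<longleftrightarrow> (\<forall>\<mu>\<in>{1..<d}. mat_rank (flattening d n \<mu> Z) = r \<mu>)"

definition TT_manifold :: "nat \<Rightarrow> (nat \<Rightarrow> nat) \<Rightarrow> (nat \<Rightarrow> nat) \<Rightarrow> tensor set" where
  "TT_manifold d n r = {Z. has_TT_rank d n r Z}"

text \<open>row vector W_1(i_1)...W_k(i_k), entry b (row index 0 since r_0 = 1)\<close>
fun partial_prod :: "(nat \<Rightarrow> nat) \<Rightarrow> (nat \<Rightarrow> core) \<Rightarrow> nat \<Rightarrow> (nat \<Rightarrow> nat) \<Rightarrow> nat \<Rightarrow> real" where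
  "partial_prod r W 0 i b = (if b = 0 then 1 else 0)"
| "partial_prod r W (Suc k) i b =
     (\<Sum>a<r k. partial_prod r W k i a * W (Suc k) a (i (Suc k)) b)"

definition M_TT :: "nat \<Rightarrow> (nat \<Rightarrow> nat) \<Rightarrow> (nat \<Rightarrow> core) \<Rightarrow> tensor" where
  "M_TT d r W = (\<lambda>i. partial_prod r W d i 0)"

text \<open>W_k^L has rows indexed by (a,i), a < r(k-1), i < n k; (W^L)^T W^L = I\<close>
definition left_orth_core :: "(nat \<Rightarrow> nat) \<Rightarrow> (nat \<Rightarrow> nat) \<Rightarrow> nat \<Rightarrow> core \<Rightarrow> bool" where
  "left_orth_core n r k W \<longleftrightarrow>
     (\<forall>b<r k. \<forall>b'<r k. (\<Sum>a<r (k-1). \<Sum>i<n k. W a i b * W a i b') = (if b = b' then 1 else 0))"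

definition left_orthogonal :: "nat \<Rightarrow> (nat \<Rightarrow> nat) \<Rightarrow> (nat \<Rightarrow> nat) \<Rightarrow> (nat \<Rightarrow> core) \<Rightarrow> bool" where
  "left_orthogonal d n r W \<longleftrightarrow> (\<forall>k\<in>{1..<d}. left_orth_core n r k (W k))"

definition minimal_TT :: "nat \<Rightarrow> (nat \<Rightarrow> nat) \<Rightarrow> (nat \<Rightarrow> nat) \<Rightarrow> (nat \<Rightarrow> core) \<Rightarrow> bool" where
  "minimal_TT d n r W \<longleftrightarrow> has_TT_rank d n r (M_TT d r W)"

definition gauge_core :: "(nat \<Rightarrow> nat) \<Rightarrow> (nat \<Rightarrow> nat) \<Rightarrow> nat \<Rightarrow> core \<Rightarrow> core \<Rightarrow> bool" where
  "gauge_core n r k dV U \<longleftrightarrow>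
     (\<forall>b<r k. \<forall>b'<r k. (\<Sum>a<r (k-1). \<Sum>i<n k. dV a i b * U a i b') = 0)"

definition TT_tangent :: "nat \<Rightarrow> (nat \<Rightarrow> nat) \<Rightarrow> (nat \<Rightarrow> core) \<Rightarrow> (nat \<Rightarrow> core) \<Rightarrow> tensor" where
  "TT_tangent d r U dV = (\<lambda>i. \<Sum>k\<in>{1..d}. M_TT d r (U(k := dV k)) i)"

definition smooth_on_real :: "real set \<Rightarrow> (real \<Rightarrow> real) \<Rightarrow> bool" where
  "smooth_on_real S f \<longleftrightarrow>
     (\<exists>D. D 0 = f \<and> (\<forall>m. \<forall>x\<in>S. (D m has_real_derivative D (Suc m) x) (at x)))"

definition smooth_core_curve :: "(nat \<Rightarrow> nat) \<Rightarrow> (nat \<Rightarrow> nat) \<Rightarrow> nat \<Rightarrow> real set \<Rightarrow> (real \<Rightarrow> core) \<Rightarrow> bool" where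
  "smooth_core_curve n r k S c \<longleftrightarrow>
     (\<forall>a<r (k-1). \<forall>i<n k. \<forall>b<r k. smooth_on_real S (\<lambda>t. c t a i b))"

end

theory Submission
  imports Defs
begin

(*
  For k < d view W_k(t) = U_k + t dV_k as a matrix with rows (a, i) and columns b.
  Left-orthogonality of U_k and the gauge condition give
  W_k(t)^T W_k(t) = I + t^2 dV_k^T dV_k, a positive definite matrix depending on t^2 only.
  Gram-Schmidt with respect to it yields an upper triangular Q_k(t^2) with Q_k(0) = I such
  that c_k(t) = W_k(t) Q_k(t^2) is left-orthogonal. As Q_k(t^2) is smooth and even in t,
  Q_k(t^2) - I = O(t^2); hence c_k(t) = U_k + t dV_k + O(t^2), and by the product rule the
  derivative of M_TT(c(t)) at 0 is V.
  Each flattening of M_TT(c(t)) is a sum of r_mu rank-one matrices, so its rank is at most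
  r_mu, and the rank is at least r_mu near t = 0 because it equals r_mu at t = 0 and the
  rank is lower semicontinuous: the Gram determinant of r_mu independent columns is
  continuous and nonzero at 0.
*)

section \<open>Smooth real functions\<close>

fun k_differentiable :: "nat \<Rightarrow> (real \<Rightarrow> real) \<Rightarrow> bool" where
  "k_differentiable 0 f = True"
| "k_differentiable (Suc k) f =
     (\<exists>f'. (\<forall>x. (f has_real_derivative f' x) (at x)) \<and> k_differentiable k f')"

definition smooth :: "(real \<Rightarrow> real) \<Rightarrow> bool" where
  "smooth f \<longleftrightarrow> (\<forall>k. k_differentiable k f)"

lemma k_differentiable_SucI:
  "(\<And>x. (f has_real_derivative f' x) (at x)) \<Longrightarrow> k_differentiable k f' \<Longrightarrow>
   k_differentiable (Suc k) f"
  by auto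

lemma k_differentiable_SucD: "k_differentiable (Suc k) f \<Longrightarrow> k_differentiable k f"
proof (induction k arbitrary: f)
  case (Suc k)
  then obtain f' where "\<And>x. (f has_real_derivative f' x) (at x)" "k_differentiable (Suc k) f'"
    by auto
  with Suc.IH show ?case by (metis k_differentiable_SucI)
qed simp

lemma k_differentiable_const: "k_differentiable k (\<lambda>x. c)"
proof (induction k arbitrary: c)
  case (Suc k)
  show ?case by (rule k_differentiable_SucI[OF DERIV_const Suc.IH])
qed simp

lemma k_differentiable_ident: "k_differentiable k (\<lambda>x. x)"
proof (cases k)
  case (Suc k')
  show ?thesis unfolding Suc by (rule k_differentiable_SucI[OF DERIV_ident k_differentiable_const])
qed simp

lemma k_differentiable_add:
  "k_differentiable k f \<Longrightarrow> k_differentiable k g \<Longrightarrow> k_differentiable k (\<lambda>x. f x + g x)"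
proof (induction k arbitrary: f g)
  case (Suc k)
  then obtain f' g' where f': "\<And>x. (f has_real_derivative f' x) (at x)" "k_differentiable k f'"
    and g': "\<And>x. (g has_real_derivative g' x) (at x)" "k_differentiable k g'"
    by auto
  show ?case by (rule k_differentiable_SucI[OF DERIV_add[OF f'(1) g'(1)] Suc.IH[OF f'(2) g'(2)]])
qed simp

lemma k_differentiable_mult:
  "k_differentiable k f \<Longrightarrow> k_differentiable k g \<Longrightarrow> k_differentiable k (\<lambda>x. f x * g x)"
proof (induction k arbitrary: f g)
  case (Suc k)
  obtain f' g' where f': "\<And>x. (f has_real_derivative f' x) (at x)" "k_differentiable k f'"
    and g': "\<And>x. (g has_real_derivative g' x) (at x)" "k_differentiable k g'"
    using Suc.prems by auto
  have "k_differentiable k f" "k_differentiable k g"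
    using Suc.prems k_differentiable_SucD by blast+
  then have "k_differentiable k (\<lambda>x. f' x * g x + g' x * f x)"
    by (intro k_differentiable_add Suc.IH f'(2) g'(2))
  then show ?case by (rule k_differentiable_SucI[OF DERIV_mult[OF f'(1) g'(1)]])
qed simp

lemma k_differentiable_inverse:
  "k_differentiable k g \<Longrightarrow> \<forall>x. g x \<noteq> 0 \<Longrightarrow> k_differentiable k (\<lambda>x. inverse (g x))"
proof (induction k arbitrary: g)
  case (Suc k)
  then obtain g' where g': "\<And>x. (g has_real_derivative g' x) (at x)" "k_differentiable k g'"
    by auto
  have "k_differentiable k (\<lambda>x. inverse (g x))"
    using Suc k_differentiable_SucD by blast
  then have "k_differentiable k (\<lambda>x. - 1 * g' x * (inverse (g x) * inverse (g x)))"
    using g'(2) by (intro k_differentiable_mult k_differentiable_const)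
  moreover have "((\<lambda>x. inverse (g x)) has_real_derivative
      - 1 * g' x * (inverse (g x) * inverse (g x))) (at x)" for x
    using DERIV_inverse_fun[OF g'(1)] Suc.prems(2) by (simp add: power2_eq_square)
  ultimately show ?case by (rule k_differentiable_SucI[rotated])
qed simp

lemma k_differentiable_sqrt:
  "k_differentiable k g \<Longrightarrow> \<forall>x. g x > 0 \<Longrightarrow> k_differentiable k (\<lambda>x. sqrt (g x))"
proof (induction k arbitrary: g)
  case (Suc k)
  then obtain g' where g': "\<And>x. (g has_real_derivative g' x) (at x)" "k_differentiable k g'"
    by auto
  have "k_differentiable k (\<lambda>x. sqrt (g x))"
    using Suc k_differentiable_SucD by blast
  then have "k_differentiable k (\<lambda>x. inverse (sqrt (g x)) / 2 * g' x)"
    unfolding divide_inverse using g'(2) Suc.prems(2) real_sqrt_gt_zero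
    by (intro k_differentiable_mult k_differentiable_inverse k_differentiable_const)
      (auto simp: less_imp_neq[symmetric])
  moreover have "((\<lambda>x. sqrt (g x)) has_real_derivative inverse (sqrt (g x)) / 2 * g' x) (at x)"
    for x
    using DERIV_chain2[OF DERIV_real_sqrt g'(1)] Suc.prems(2) by blast
  ultimately show ?case by (rule k_differentiable_SucI[rotated])
qed simp

lemma smooth_const [simp]: "smooth (\<lambda>x. c)"
  by (simp add: smooth_def k_differentiable_const)

lemma smooth_ident [simp]: "smooth (\<lambda>x. x)"
  by (simp add: smooth_def k_differentiable_ident)

lemma smooth_add: "smooth f \<Longrightarrow> smooth g \<Longrightarrow> smooth (\<lambda>x. f x + g x)"
  by (simp add: smooth_def k_differentiable_add)

lemma smooth_mult: "smooth f \<Longrightarrow> smooth g \<Longrightarrow> smooth (\<lambda>x. f x * g x)"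
  by (simp add: smooth_def k_differentiable_mult)

lemma smooth_diff: "smooth f \<Longrightarrow> smooth g \<Longrightarrow> smooth (\<lambda>x. f x - g x)"
  using smooth_add[of f "\<lambda>x. (- 1) * g x"] smooth_mult[of "\<lambda>x. - 1" g] by simp

lemma smooth_sum: "(\<And>a. a \<in> A \<Longrightarrow> smooth (f a)) \<Longrightarrow> smooth (\<lambda>x. \<Sum>a\<in>A. f a x)"
  by (induction A rule: infinite_finite_induct) (auto intro: smooth_add)

lemma smooth_divide_sqrt:
  assumes "smooth f" "smooth g" and pos: "\<And>x. g x > 0"
  shows "smooth (\<lambda>x. f x / sqrt (g x))"
proof -
  have "\<forall>x. sqrt (g x) \<noteq> 0" using pos by (simp add: less_imp_neq[symmetric])
  then have "k_differentiable k (\<lambda>x. f x * inverse (sqrt (g x)))" for k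
    using assms by (intro k_differentiable_mult k_differentiable_inverse k_differentiable_sqrt)
      (auto simp: smooth_def)
  then show ?thesis by (simp add: smooth_def divide_inverse)
qed

lemma k_differentiable_Suc_deriv:
  "k_differentiable (Suc k) f \<longleftrightarrow>
     (\<forall>x. (f has_real_derivative deriv f x) (at x)) \<and> k_differentiable k (deriv f)"
proof
  assume "k_differentiable (Suc k) f"
  then obtain f' where f': "\<forall>x. (f has_real_derivative f' x) (at x)" "k_differentiable k f'"
    by auto
  then have "deriv f = f'" by (auto intro!: DERIV_imp_deriv)
  with f' show "(\<forall>x. (f has_real_derivative deriv f x) (at x)) \<and> k_differentiable k (deriv f)"
    by simp
qed auto

lemma smooth_deriv: "smooth f \<Longrightarrow> (f has_real_derivative deriv f x) (at x) \<and> smooth (deriv f)"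
  unfolding smooth_def using k_differentiable_Suc_deriv by blast

lemma smooth_isCont: "smooth f \<Longrightarrow> isCont f x"
  using smooth_deriv DERIV_isCont by blast

lemma smooth_derivative_tower:
  assumes "smooth f"
  shows "\<exists>D. D 0 = f \<and> (\<forall>m x. (D m has_real_derivative D (Suc m) x) (at x))"
proof -
  have "smooth ((deriv ^^ m) f)" for m
    by (induction m) (simp_all add: assms smooth_deriv)
  then show ?thesis by (intro exI[of _ "\<lambda>m. (deriv ^^ m) f"]) (simp add: smooth_deriv)
qed

lemma smooth_imp_smooth_on_real: "smooth f \<Longrightarrow> smooth_on_real S f"
  unfolding smooth_on_real_def using smooth_derivative_tower by blast

lemma smooth_even_bigo_square:
  assumes "smooth f" and even: "\<And>t. f (- t) = f t"
  shows "(\<lambda>t. f t - f 0) \<in> O[at 0](\<lambda>t. t\<^sup>2)"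
proof -
  obtain D where D0: "D 0 = f" and D: "\<And>m x. (D m has_real_derivative D (Suc m) x) (at x)"
    using smooth_derivative_tower[OF assms(1)] by blast
  have "(f has_real_derivative - D 1 0) (at 0)"
    using D[of 0 0] DERIV_mirror[where f=f and x=0 and y="D 1 0"] by (simp add: D0 even)
  then have D1: "D 1 0 = 0"
    using DERIV_unique D[of 0 0] by (fastforce simp: D0)
  have "((\<lambda>x. \<bar>D 2 x\<bar>) \<longlongrightarrow> \<bar>D 2 0\<bar>) (nhds 0)"
    using DERIV_isCont[OF D]
    by (intro tendsto_rabs) (simp add: isCont_def tendsto_at_iff_tendsto_nhds)
  then have "eventually (\<lambda>x. \<bar>D 2 x\<bar> < \<bar>D 2 0\<bar> + 1) (nhds 0)"
    by (rule order_tendstoD) simp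
  then obtain \<delta> where "\<delta> > 0" and \<delta>: "\<And>x. \<bar>x\<bar> < \<delta> \<Longrightarrow> \<bar>D 2 x\<bar> < \<bar>D 2 0\<bar> + 1"
    unfolding eventually_nhds_metric dist_real_def by auto
  have "\<bar>f t - f 0\<bar> \<le> (\<bar>D 2 0\<bar> + 1) * t\<^sup>2" if "\<bar>t\<bar> < \<delta>" for t
  proof -
    obtain \<xi> where "\<bar>\<xi>\<bar> \<le> \<bar>t\<bar>"
      and taylor: "f t = (\<Sum>m<2. D m 0 / fact m * t ^ m) + D 2 \<xi> / fact 2 * t ^ 2"
      using Maclaurin_all_le[of D f t 2] D0 D by blast
    have "f t - f 0 = D 2 \<xi> / 2 * t\<^sup>2"
      using taylor D1 by (simp add: D0 numeral_2_eq_2)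
    then have "\<bar>f t - f 0\<bar> = \<bar>D 2 \<xi>\<bar> / 2 * t\<^sup>2" by (simp only: abs_mult) simp
    also have "\<dots> \<le> (\<bar>D 2 0\<bar> + 1) * t\<^sup>2"
      using \<delta>[of \<xi>] \<open>\<bar>\<xi>\<bar> \<le> \<bar>t\<bar>\<close> that by (intro mult_right_mono) auto
    finally show ?thesis .
  qed
  then have "eventually (\<lambda>t. norm (f t - f 0) \<le> (\<bar>D 2 0\<bar> + 1) * norm (t\<^sup>2)) (at 0)"
    unfolding eventually_at using \<open>\<delta> > 0\<close> by (auto intro!: exI[of _ \<delta>])
  then show ?thesis by (rule bigoI)
qed

lemma bigo_square_has_derivative_zero:
  assumes "f \<in> O[at 0](\<lambda>t. t\<^sup>2)" and "f 0 = 0"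
  shows "(f has_real_derivative 0) (at 0)"
proof -
  obtain C where C: "eventually (\<lambda>t. norm (f t) \<le> C * norm (t\<^sup>2)) (at (0::real))"
    using landau_o.bigE[OF assms(1)] by blast
  then have "eventually (\<lambda>h. norm ((f (0 + h) - f 0) / h) \<le> C * \<bar>h\<bar>) (at (0::real))"
    by eventually_elim
      (auto simp: assms(2) abs_divide power2_eq_square abs_mult divide_le_eq mult_ac)
  moreover have "((\<lambda>h. C * \<bar>h\<bar>) \<longlongrightarrow> 0) (at (0::real))"
    by (auto intro!: tendsto_eq_intros)
  ultimately have "((\<lambda>h. (f (0 + h) - f 0) / h) \<longlongrightarrow> 0) (at 0)"
    by (rule Lim_null_comparison)
  then show ?thesis by (simp add: DERIV_def)
qed


section \<open>Gram--Schmidt orthonormalisation with respect to a Gram matrix\<close>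

(* unit_vec j is the j-th standard basis vector; read as a matrix, unit_vec is the identity. *)
definition unit_vec :: "nat \<Rightarrow> nat \<Rightarrow> real" where
  "unit_vec j a = (if a = j then 1 else 0)"

definition gram_form :: "nat \<Rightarrow> (nat \<Rightarrow> nat \<Rightarrow> real) \<Rightarrow> (nat \<Rightarrow> real) \<Rightarrow> (nat \<Rightarrow> real) \<Rightarrow> real"
  where "gram_form r G x y = (\<Sum>a<r. \<Sum>b<r. x a * G a b * y b)"

definition pos_def_gram :: "nat \<Rightarrow> (nat \<Rightarrow> nat \<Rightarrow> real) \<Rightarrow> bool" where
  "pos_def_gram r G \<longleftrightarrow>
     (\<forall>a<r. \<forall>b<r. G a b = G b a) \<and> (\<forall>x. (\<exists>a<r. x a \<noteq> 0) \<longrightarrow> 0 < gram_form r G x x)"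

lemma unit_vec_mult [simp]:
  "unit_vec j a * y = (if a = j then y else 0)" "y * unit_vec j a = (if a = j then y else 0)"
  by (simp_all add: unit_vec_def)

lemma gram_form_left: "gram_form r G x y = (\<Sum>a<r. x a * (\<Sum>b<r. G a b * y b))"
  by (simp add: gram_form_def sum_distrib_left mult.assoc)

lemma gram_form_commute:
  assumes "\<forall>a<r. \<forall>b<r. G a b = G b a"
  shows "gram_form r G x y = gram_form r G y x"
  unfolding gram_form_def using assms by (subst sum.swap) (auto intro!: sum.cong simp: mult_ac)

lemma gram_form_diff_left: "gram_form r G (\<lambda>a. x a - y a) z = gram_form r G x z - gram_form r G y z"
  by (simp add: gram_form_left left_diff_distrib sum_subtractf)

lemma gram_form_divide_left: "gram_form r G (\<lambda>a. x a / c) z = gram_form r G x z / c"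
  by (simp add: gram_form_left sum_divide_distrib)

lemma gram_form_sum_left:
  "gram_form r G (\<lambda>a. \<Sum>l\<in>L. c l * x l a) z = (\<Sum>l\<in>L. c l * gram_form r G (x l) z)"
proof -
  have "gram_form r G (\<lambda>a. \<Sum>l\<in>L. c l * x l a) z =
      (\<Sum>a<r. \<Sum>l\<in>L. c l * (x l a * (\<Sum>b<r. G a b * z b)))"
    by (simp add: gram_form_left sum_distrib_right mult.assoc)
  also have "\<dots> = (\<Sum>l\<in>L. c l * gram_form r G (x l) z)"
    by (subst sum.swap) (simp add: gram_form_left sum_distrib_left)
  finally show ?thesis .
qed

lemma gram_form_unit_vec: "gram_form r unit_vec x y = (\<Sum>a<r. x a * y a)"
  by (simp add: gram_form_left)

lemma gram_form_cong:
  "(\<And>a b. a < r \<Longrightarrow> b < r \<Longrightarrow> G a b = G' a b) \<Longrightarrow> gram_form r G x y = gram_form r G' x y"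
  by (simp add: gram_form_def)

(* Gram-Schmidt applied to unit_vec 0, unit_vec 1, ... in the inner product gram_form r G:
   gram_schmidt_vec r G j a is entry (a, j) of the upper triangular Q with Q^T G Q = I. *)
function gram_schmidt_vec :: "nat \<Rightarrow> (nat \<Rightarrow> nat \<Rightarrow> real) \<Rightarrow> nat \<Rightarrow> nat \<Rightarrow> real" where
  "gram_schmidt_vec r G j =
     (let z = (\<lambda>a. unit_vec j a -
                  (\<Sum>i<j. gram_form r G (unit_vec j) (gram_schmidt_vec r G i) *
                    gram_schmidt_vec r G i a))
      in (\<lambda>a. z a / sqrt (gram_form r G z z)))"
  by auto
termination by (relation "Wellfounded.measure (\<lambda>(r, G, j). j)") auto

declare gram_schmidt_vec.simps [simp del]

definition gram_schmidt_res :: "nat \<Rightarrow> (nat \<Rightarrow> nat \<Rightarrow> real) \<Rightarrow> nat \<Rightarrow> nat \<Rightarrow> real" where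
  "gram_schmidt_res r G j a = unit_vec j a -
     (\<Sum>i<j. gram_form r G (unit_vec j) (gram_schmidt_vec r G i) * gram_schmidt_vec r G i a)"

lemma gram_schmidt_vec_eq:
  "gram_schmidt_vec r G j a =
     gram_schmidt_res r G j a /
       sqrt (gram_form r G (gram_schmidt_res r G j) (gram_schmidt_res r G j))"
  by (subst gram_schmidt_vec.simps) (simp add: Let_def gram_schmidt_res_def[abs_def])

lemma gram_schmidt_vec_upper_triangular: "j < a \<Longrightarrow> gram_schmidt_vec r G j a = 0"
proof (induction j arbitrary: a rule: less_induct)
  case (less j)
  then have "gram_schmidt_res r G j a = 0"
    by (simp add: gram_schmidt_res_def unit_vec_def)
  then show ?case by (simp add: gram_schmidt_vec_eq)
qed

lemma gram_schmidt_res_diag: "gram_schmidt_res r G j j = 1"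
  by (simp add: gram_schmidt_res_def unit_vec_def gram_schmidt_vec_upper_triangular)

lemma gram_schmidt_res_orthogonal:
  assumes "\<And>l i. l < j \<Longrightarrow> i < j \<Longrightarrow>
      gram_form r G (gram_schmidt_vec r G l) (gram_schmidt_vec r G i) = unit_vec l i"
    and "i < j"
  shows "gram_form r G (gram_schmidt_res r G j) (gram_schmidt_vec r G i) = 0"
proof -
  have "gram_form r G (gram_schmidt_res r G j) (gram_schmidt_vec r G i) =
      gram_form r G (unit_vec j) (gram_schmidt_vec r G i) -
      (\<Sum>l<j. gram_form r G (unit_vec j) (gram_schmidt_vec r G l) *
        gram_form r G (gram_schmidt_vec r G l) (gram_schmidt_vec r G i))"
    unfolding gram_schmidt_res_def[abs_def] gram_form_diff_left gram_form_sum_left ..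
  also have "\<dots> = 0"
    using assms by simp
  finally show ?thesis .
qed

lemma gram_schmidt_res_pos:
  assumes "pos_def_gram r G" and "j < r"
  shows "0 < gram_form r G (gram_schmidt_res r G j) (gram_schmidt_res r G j)"
proof -
  have "\<exists>a<r. gram_schmidt_res r G j a \<noteq> 0"
    using assms(2) gram_schmidt_res_diag by (intro exI[of _ j]) simp
  with assms(1) show ?thesis unfolding pos_def_gram_def by blast
qed

lemma gram_schmidt_vec_orthonormal:
  assumes G: "pos_def_gram r G" and "i < r" "j < r"
  shows "gram_form r G (gram_schmidt_vec r G i) (gram_schmidt_vec r G j) = unit_vec i j"
proof -
  let ?z = "gram_schmidt_res r G" and ?q = "gram_schmidt_vec r G"
  have sym: "gram_form r G x y = gram_form r G y x" for x y
    using G by (intro gram_form_commute) (simp add: pos_def_gram_def)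
  have q: "?q j = (\<lambda>a. ?z j a / sqrt (gram_form r G (?z j) (?z j)))" for j
    by (simp add: gram_schmidt_vec_eq fun_eq_iff)
  have "\<forall>i<m. \<forall>j<m. gram_form r G (?q i) (?q j) = unit_vec i j" if "m \<le> r" for m
    using that
  proof (induction m)
    case (Suc m)
    have IH: "gram_form r G (?q i) (?q j) = unit_vec i j" if "i < m" "j < m" for i j
      using Suc that by simp
    have orth: "gram_form r G (?q m) (?q i) = 0" if "i < m" for i
      unfolding q[of m] gram_form_divide_left
      using gram_schmidt_res_orthogonal[OF IH that] by simp
    have "gram_form r G (?q m) (?q m) = 1"
      unfolding q[of m] gram_form_divide_left
      by (subst sym) (use gram_schmidt_res_pos[OF G, of m] Suc.prems in
          \<open>simp add: gram_form_divide_left\<close>)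
    with IH orth sym show ?case
      by (auto simp: less_Suc_eq unit_vec_def)
  qed simp
  with assms show ?thesis by auto
qed

lemma gram_schmidt_vec_unit_vec: "j < r \<Longrightarrow> gram_schmidt_vec r unit_vec j = unit_vec j"
proof (induction j rule: less_induct)
  case (less j)
  have "gram_form r unit_vec (unit_vec j) (gram_schmidt_vec r unit_vec i) = 0" if "i < j" for i
    using less that by (simp add: gram_form_unit_vec) (simp add: unit_vec_def)
  then have "gram_schmidt_res r unit_vec j = unit_vec j"
    by (simp add: gram_schmidt_res_def[abs_def])
  moreover have "gram_form r unit_vec (unit_vec j) (unit_vec j) = 1"
    using less.prems by (simp add: gram_form_unit_vec) (simp add: unit_vec_def)
  ultimately show ?case by (simp add: gram_schmidt_vec_eq[abs_def])
qed

lemma smooth_gram_form: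
  assumes "\<And>a b. smooth (\<lambda>t. G t a b)" "\<And>a. smooth (\<lambda>t. x t a)" "\<And>a. smooth (\<lambda>t. y t a)"
  shows "smooth (\<lambda>t. gram_form r (G t) (x t) (y t))"
  unfolding gram_form_def using assms by (intro smooth_sum smooth_mult)

lemma smooth_gram_schmidt_vec:
  assumes G: "\<And>a b. smooth (\<lambda>t. G t a b)" and pos: "\<And>t. pos_def_gram r (G t)" and "j < r"
  shows "smooth (\<lambda>t. gram_schmidt_vec r (G t) j a)"
  using \<open>j < r\<close>
proof (induction j arbitrary: a rule: less_induct)
  case (less j)
  have res: "smooth (\<lambda>t. gram_schmidt_res r (G t) j a)" for a
    unfolding gram_schmidt_res_def using less G
    by (intro smooth_diff smooth_sum smooth_mult smooth_gram_form) auto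
  show ?case
    unfolding gram_schmidt_vec_eq using G res gram_schmidt_res_pos[OF pos less.prems]
    by (intro smooth_divide_sqrt smooth_gram_form)
qed


section \<open>Orthonormalising a perturbed core\<close>

definition core_gram :: "nat \<Rightarrow> nat \<Rightarrow> core \<Rightarrow> nat \<Rightarrow> nat \<Rightarrow> real" where
  "core_gram R N W a b = (\<Sum>\<alpha><R. \<Sum>i<N. W \<alpha> i a * W \<alpha> i b)"

definition id_plus_core_gram :: "nat \<Rightarrow> nat \<Rightarrow> core \<Rightarrow> real \<Rightarrow> nat \<Rightarrow> nat \<Rightarrow> real" where
  "id_plus_core_gram R N W s a b = unit_vec a b + s * core_gram R N W a b"

lemma gram_form_core_gram:
  "gram_form r (core_gram R N W) x y =
     (\<Sum>\<alpha><R. \<Sum>i<N. (\<Sum>a<r. W \<alpha> i a * x a) * (\<Sum>b<r. W \<alpha> i b * y b))"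
proof -
  have "gram_form r (core_gram R N W) x y =
      (\<Sum>a<r. \<Sum>b<r. \<Sum>\<alpha><R. \<Sum>i<N. W \<alpha> i a * x a * (W \<alpha> i b * y b))"
    by (simp add: gram_form_def core_gram_def sum_distrib_left sum_distrib_right mult_ac)
  also have "\<dots> = (\<Sum>a<r. \<Sum>\<alpha><R. \<Sum>b<r. \<Sum>i<N. W \<alpha> i a * x a * (W \<alpha> i b * y b))"
    by (intro sum.cong refl sum.swap)
  also have "\<dots> = (\<Sum>\<alpha><R. \<Sum>a<r. \<Sum>i<N. \<Sum>b<r. W \<alpha> i a * x a * (W \<alpha> i b * y b))"
    by (subst sum.swap) (intro sum.cong refl sum.swap)
  also have "\<dots> = (\<Sum>\<alpha><R. \<Sum>i<N. \<Sum>a<r. \<Sum>b<r. W \<alpha> i a * x a * (W \<alpha> i b * y b))"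
    by (intro sum.cong refl sum.swap)
  also have "\<dots> = (\<Sum>\<alpha><R. \<Sum>i<N. (\<Sum>a<r. W \<alpha> i a * x a) * (\<Sum>b<r. W \<alpha> i b * y b))"
    by (simp add: sum_product)
  finally show ?thesis .
qed

lemma core_gram_mult_right:
  "core_gram R N (\<lambda>\<alpha> i b. \<Sum>a<r. W \<alpha> i a * Q a b) b b' =
     gram_form r (core_gram R N W) (\<lambda>a. Q a b) (\<lambda>a. Q a b')"
  by (simp add: gram_form_core_gram core_gram_def)

lemma gram_form_id_plus_core_gram:
  "gram_form r (id_plus_core_gram R N W s) x y =
     (\<Sum>a<r. x a * y a) + s * gram_form r (core_gram R N W) x y"
  by (simp add: id_plus_core_gram_def gram_form_left distrib_left sum.distrib sum_distrib_left
      mult_ac)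

lemma pos_def_id_plus_core_gram:
  assumes "s \<ge> 0"
  shows "pos_def_gram r (id_plus_core_gram R N W s)"
  unfolding pos_def_gram_def
proof (intro conjI allI impI)
  fix a b
  show "id_plus_core_gram R N W s a b = id_plus_core_gram R N W s b a"
    by (simp add: id_plus_core_gram_def unit_vec_def core_gram_def mult.commute)
next
  fix x :: "nat \<Rightarrow> real"
  assume "\<exists>a<r. x a \<noteq> 0"
  then obtain a where "a < r" "x a \<noteq> 0" by blast
  then have "0 < (\<Sum>a<r. x a * x a)"
    by (intro sum_pos2[of _ a]) (auto simp flip: not_real_square_gt_zero)
  moreover have "0 \<le> gram_form r (core_gram R N W) x x"
    by (simp add: gram_form_core_gram sum_nonneg)
  ultimately show "0 < gram_form r (id_plus_core_gram R N W s) x x"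
    using assms by (simp add: gram_form_id_plus_core_gram add_pos_nonneg)
qed

lemma core_gram_add_scaled:
  assumes orth: "\<forall>a<r. \<forall>b<r. core_gram R N U a b = unit_vec a b"
    and gauge: "\<forall>a<r. \<forall>b<r. (\<Sum>\<alpha><R. \<Sum>i<N. W \<alpha> i a * U \<alpha> i b) = 0"
    and "a < r" "b < r"
  shows "core_gram R N (\<lambda>\<alpha> i a. U \<alpha> i a + t * W \<alpha> i a) a b = id_plus_core_gram R N W (t\<^sup>2) a b"
proof -
  have "core_gram R N (\<lambda>\<alpha> i a. U \<alpha> i a + t * W \<alpha> i a) a b =
      core_gram R N U a b + t * (\<Sum>\<alpha><R. \<Sum>i<N. W \<alpha> i a * U \<alpha> i b)
      + t * (\<Sum>\<alpha><R. \<Sum>i<N. W \<alpha> i b * U \<alpha> i a) + t\<^sup>2 * core_gram R N W a b"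
    by (simp add: core_gram_def algebra_simps sum.distrib sum_distrib_left power2_eq_square)
  then show ?thesis using assms by (simp add: id_plus_core_gram_def)
qed

(* For b < r this is (U + t W) Q(t^2), where Q(s) is the Gram-Schmidt matrix of
   id_plus_core_gram R N W s, the Gram matrix of U + t W for s = t^2 (core_gram_add_scaled).
   The entries with b >= r lie outside the core; they are extended so that all entries are smooth. *)
definition orth_core_curve :: "nat \<Rightarrow> nat \<Rightarrow> nat \<Rightarrow> core \<Rightarrow> core \<Rightarrow> real \<Rightarrow> core" where
  "orth_core_curve R N r U W t \<alpha> i b =
     (if b < r then
        \<Sum>a<r. (U \<alpha> i a + t * W \<alpha> i a) * gram_schmidt_vec r (id_plus_core_gram R N W (t\<^sup>2)) b a
      else U \<alpha> i b + t * W \<alpha> i b)"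

lemma id_plus_core_gram_0 [simp]: "id_plus_core_gram R N W 0 = unit_vec"
  by (simp add: id_plus_core_gram_def fun_eq_iff)

lemma orth_core_curve_0: "orth_core_curve R N r U W 0 = U"
  by (auto simp: fun_eq_iff orth_core_curve_def gram_schmidt_vec_unit_vec)

lemma smooth_gram_schmidt_vec_id_plus_core_gram:
  "b < r \<Longrightarrow> smooth (\<lambda>t. gram_schmidt_vec r (id_plus_core_gram R N W (t\<^sup>2)) b a)"
  by (intro smooth_gram_schmidt_vec pos_def_id_plus_core_gram)
    (auto simp: id_plus_core_gram_def power2_eq_square intro!: smooth_add smooth_mult)

lemma smooth_orth_core_curve: "smooth (\<lambda>t. orth_core_curve R N r U W t \<alpha> i b)"
  unfolding orth_core_curve_def
  by (cases "b < r")
    (auto intro!: smooth_sum smooth_add smooth_mult smooth_gram_schmidt_vec_id_plus_core_gram)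

lemma orth_core_curve_bigo:
  "(\<lambda>t. orth_core_curve R N r U W t \<alpha> i b - U \<alpha> i b - t * W \<alpha> i b) \<in> O[at 0](\<lambda>t. t\<^sup>2)"
proof (cases "b < r")
  case True
  define Q where "Q t a = gram_schmidt_vec r (id_plus_core_gram R N W (t\<^sup>2)) b a" for t a
  have "orth_core_curve R N r U W t \<alpha> i b - U \<alpha> i b - t * W \<alpha> i b =
      (\<Sum>a<r. (U \<alpha> i a + t * W \<alpha> i a) * (Q t a - Q 0 a))" for t
    using True
    by (simp add: orth_core_curve_def Q_def gram_schmidt_vec_unit_vec right_diff_distrib
        sum_subtractf)
  moreover have "(\<lambda>t. (U \<alpha> i a + t * W \<alpha> i a) * (Q t a - Q 0 a)) \<in> O[at 0](\<lambda>t. 1 * t\<^sup>2)" for a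
  proof (rule landau_o.big.mult)
    show "(\<lambda>t. U \<alpha> i a + t * W \<alpha> i a) \<in> O[at 0](\<lambda>_. 1)"
      by (rule bigoI_tendsto[where c = "U \<alpha> i a"]) (auto intro!: tendsto_eq_intros)
    show "(\<lambda>t. Q t a - Q 0 a) \<in> O[at 0](\<lambda>t. t\<^sup>2)"
      using True unfolding Q_def
      by (intro smooth_even_bigo_square smooth_gram_schmidt_vec_id_plus_core_gram) simp_all
  qed
  ultimately show ?thesis by (simp add: big_sum_in_bigo)
qed (simp add: orth_core_curve_def)

lemma orth_core_curve_has_derivative:
  "((\<lambda>t. orth_core_curve R N r U W t \<alpha> i b) has_real_derivative W \<alpha> i b) (at 0)"
proof -
  have "((\<lambda>t. orth_core_curve R N r U W t \<alpha> i b - U \<alpha> i b - t * W \<alpha> i b)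
      has_real_derivative 0) (at 0)"
    by (intro bigo_square_has_derivative_zero orth_core_curve_bigo) (simp add: orth_core_curve_0)
  moreover have "((\<lambda>t. U \<alpha> i b + t * W \<alpha> i b) has_real_derivative W \<alpha> i b) (at 0)"
    by (auto intro!: derivative_eq_intros)
  ultimately show ?thesis by (auto dest: DERIV_add)
qed

lemma core_gram_orth_core_curve:
  assumes orth: "\<forall>a<r. \<forall>b<r. core_gram R N U a b = unit_vec a b"
    and gauge: "\<forall>a<r. \<forall>b<r. (\<Sum>\<alpha><R. \<Sum>i<N. W \<alpha> i a * U \<alpha> i b) = 0"
    and "b < r" "b' < r"
  shows "core_gram R N (orth_core_curve R N r U W t) b b' = unit_vec b b'"
proof -
  let ?G = "id_plus_core_gram R N W (t\<^sup>2)"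
  have "core_gram R N (orth_core_curve R N r U W t) b b' =
      core_gram R N (\<lambda>\<alpha> i b. \<Sum>a<r. (U \<alpha> i a + t * W \<alpha> i a) * gram_schmidt_vec r ?G b a) b b'"
    using assms(3,4) by (simp add: orth_core_curve_def core_gram_def)
  also have "\<dots> = gram_form r (core_gram R N (\<lambda>\<alpha> i a. U \<alpha> i a + t * W \<alpha> i a))
        (gram_schmidt_vec r ?G b) (gram_schmidt_vec r ?G b')"
    by (rule core_gram_mult_right)
  also have "\<dots> = gram_form r ?G (gram_schmidt_vec r ?G b) (gram_schmidt_vec r ?G b')"
    using orth gauge by (intro gram_form_cong core_gram_add_scaled) auto
  also have "\<dots> = unit_vec b b'"
    using assms(3,4) by (intro gram_schmidt_vec_orthonormal pos_def_id_plus_core_gram) auto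
  finally show ?thesis .
qed


section \<open>Rank bounds for real matrices\<close>

lemma rank_sum_of_products_le:
  fixes f g :: "nat \<Rightarrow> nat \<Rightarrow> real"
  shows "vec_space.rank nr (mat nr nc (\<lambda>(p, q). \<Sum>a<m. f a p * g a q)) \<le> m"
proof (induction m)
  case 0
  have "mat nr nc (\<lambda>(p, q). \<Sum>a<0. f a p * g a q) = (0\<^sub>m nr nc :: real mat)"
    by (intro eq_matI) auto
  then show ?case by (simp only: vec_space.rank_0I le_refl)
next
  case (Suc m)
  have "mat nr nc (\<lambda>(p, q). \<Sum>a<Suc m. f a p * g a q) =
     mat nr nc (\<lambda>(p, q). \<Sum>a<m. f a p * g a q) + mat nr nc (\<lambda>(p, q). f m p * g m q)"
    by (intro eq_matI) auto
  then have "vec_space.rank nr (mat nr nc (\<lambda>(p, q). \<Sum>a<Suc m. f a p * g a q)) \<le>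
     vec_space.rank nr (mat nr nc (\<lambda>(p, q). \<Sum>a<m. f a p * g a q)) +
     vec_space.rank nr (mat nr nc (\<lambda>(p, q). f m p * g m q))"
    by (simp only: vec_space.rank_subadditive[of _ nr nc] mat_carrier)
  moreover have "vec_space.rank nr (mat nr nc (\<lambda>(p, q). f m p * g m q)) \<le> 1"
    by (rule vec_space.rank_le_1_product_entries[where f = "f m" and g = "g m"]) auto
  ultimately show ?case using Suc.IH by simp
qed

lemma (in vec_space) rank_ge_if_det_gram_nonzero:
  assumes A: "A \<in> carrier_mat n nc" and B: "B \<in> carrier_mat n R"
    and cols: "set (cols B) \<subseteq> set (cols A)" and det: "det (transpose_mat B * B) \<noteq> 0"
  shows "R \<le> rank A"
proof -
  have G: "transpose_mat B * B \<in> carrier_mat R R" using B by simp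
  have distinct: "distinct (cols B)"
  proof (rule ccontr)
    assume "\<not> distinct (cols B)"
    then obtain k l where "k \<noteq> l" "k < R" "l < R" "col B k = col B l"
      using B by (auto simp: distinct_conv_nth)
    then have "col (transpose_mat B * B) k = col (transpose_mat B * B) l"
      using B by simp
    then show False using det_identical_cols[OF G \<open>k \<noteq> l\<close> \<open>k < R\<close> \<open>l < R\<close>] det by blast
  qed
  have "lin_indpt (set (cols B))"
  proof
    assume "lin_dep (set (cols B))"
    then obtain v where v: "v \<in> carrier_vec R" "v \<noteq> 0\<^sub>v R" "B *\<^sub>v v = 0\<^sub>v n"
      using lin_depE[OF B _ distinct] by blast
    have "(transpose_mat B * B) *\<^sub>v v = transpose_mat B *\<^sub>v (B *\<^sub>v v)"
      using B v by simp
    also have "\<dots> = 0\<^sub>v R"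
      unfolding v(3) using B by (intro eq_vecI) auto
    finally show False using v det det_0_iff_vec_prod_zero_field[OF G] by blast
  qed
  then have "card (set (cols B)) \<le> rank A"
    by (rule rank_ge_card_indpt[OF A cols])
  then show ?thesis using distinct_card[OF distinct] B by simp
qed

lemma det_gram_nonzero:
  fixes B :: "real mat"
  assumes B: "B \<in> carrier_mat n R" and inj: "\<And>v. v \<in> carrier_vec R \<Longrightarrow> B *\<^sub>v v = 0\<^sub>v n \<Longrightarrow> v = 0\<^sub>v R"
  shows "det (transpose_mat B * B) \<noteq> 0"
proof
  assume "det (transpose_mat B * B) = 0"
  moreover have "transpose_mat B * B \<in> carrier_mat R R" using B by simp
  ultimately obtain v where v: "v \<in> carrier_vec R" "v \<noteq> 0\<^sub>v R"
    "(transpose_mat B * B) *\<^sub>v v = 0\<^sub>v R"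
    using det_0_iff_vec_prod_zero_field by blast
  have Bv: "B *\<^sub>v v \<in> carrier_vec n" using B v by simp
  have "(B *\<^sub>v v) \<bullet> (B *\<^sub>v v) = (transpose_mat B *\<^sub>v (B *\<^sub>v v)) \<bullet> v"
    using transpose_vec_mult_scalar[OF B v(1) Bv] by simp
  also have "\<dots> = ((transpose_mat B * B) *\<^sub>v v) \<bullet> v" using v B by simp
  also have "\<dots> = 0" using v by simp
  finally have "B *\<^sub>v v = 0\<^sub>v n"
    using conjugate_square_eq_0_vec[OF Bv] by simp
  then show False using inj v by blast
qed

lemma isCont_det:
  fixes M :: "real \<Rightarrow> real mat"
  assumes "\<And>t. M t \<in> carrier_mat R R" and "\<And>i j. i < R \<Longrightarrow> j < R \<Longrightarrow> isCont (\<lambda>t. M t $$ (i, j)) x"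
  shows "isCont (\<lambda>t. det (M t)) x"
proof -
  have "isCont (\<lambda>t. \<Sum>p\<in>{p. p permutes {0..<R}}. signof p * (\<Prod>i = 0..<R. M t $$ (i, p i))) x"
    using assms(2) permutes_in_image by (fastforce intro!: continuous_intros)
  then show ?thesis using det_def'[OF assms(1)] by simp
qed

lemma (in vec_space) independent_columns:
  assumes A: "A \<in> carrier_mat n nc"
  shows "\<exists>js. set js \<subseteq> {..<nc} \<and> length js = rank A \<and>
    distinct (map (col A) js) \<and> lin_indpt (set (map (col A) js))"
proof -
  let ?P = "\<lambda>T. T \<subseteq> set (cols A) \<and> lin_indpt T"
  have "?P {}" by (simp add: lin_dep_def)
  then obtain S where S: "maximal S ?P"
    using maximal_exists_superset[of "set (cols A)" ?P "{}"] by auto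
  then have "S \<subseteq> set (cols A)" and indpt: "lin_indpt S"
    unfolding maximal_def by auto
  moreover have "set (cols A) = col A ` {..<nc}"
    using A by (auto simp: cols_def)
  ultimately obtain J where J: "J \<subseteq> {..<nc}" "inj_on (col A) J" "S = col A ` J"
    using subset_image_inj by metis
  define js where "js = sorted_list_of_set J"
  have "finite J" using J(1) by (rule finite_subset) simp
  then have "set js = J" "distinct js" by (simp_all add: js_def)
  then have "set (map (col A) js) = S" "distinct (map (col A) js)" "length js = card S"
    using J(2,3) distinct_card[of js] by (simp_all add: distinct_map card_image)
  with J(1) indpt rank_card_indpt[OF A S] \<open>set js = J\<close> show ?thesis by metis
qed

(* The Gram determinant of rank (A x) independent columns of A x is nonzero and continuous. *)
lemma eventually_rank_ge:
  fixes A :: "real \<Rightarrow> real mat"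
  assumes A: "\<And>t. A t \<in> carrier_mat nr nc"
    and cont: "\<And>p q. p < nr \<Longrightarrow> q < nc \<Longrightarrow> isCont (\<lambda>t. A t $$ (p, q)) x"
  shows "eventually (\<lambda>t. vec_space.rank nr (A x) \<le> vec_space.rank nr (A t)) (nhds x)"
proof -
  interpret V: vec_space "TYPE(real)" nr .
  obtain js where js: "set js \<subseteq> {..<nc}" "length js = V.rank (A x)"
    "distinct (map (col (A x)) js)" "V.lin_indpt (set (map (col (A x)) js))"
    using V.independent_columns[OF A] by blast
  define B where "B t = mat_of_cols nr (map (col (A t)) js)" for t
  have B: "B t \<in> carrier_mat nr (V.rank (A x))" for t
    using mat_of_cols_carrier(1)[of nr "map (col (A t)) js"] js(2) by (simp only: B_def length_map)
  have cols_B: "cols (B t) = map (col (A t)) js" for t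
    unfolding B_def using col_dim[of "A t"] A[of t] by (intro cols_mat_of_cols) auto
  have "set (cols (A t)) = col (A t) ` {..<nc}" for t
    using A[of t] by (auto simp: cols_def)
  then have cols_sub: "set (cols (B t)) \<subseteq> set (cols (A t))" for t
    using cols_B js(1) by auto
  have det: "det (transpose_mat (B x) * B x) \<noteq> 0"
    using js(3,4) V.lin_depI[OF B] by (intro det_gram_nonzero[OF B]) (auto simp: cols_B)
  have "isCont (\<lambda>t. det (transpose_mat (B t) * B t)) x"
  proof (rule isCont_det)
    fix k l assume "k < V.rank (A x)" "l < V.rank (A x)"
    then have "js ! k \<in> set js" "js ! l \<in> set js"
      using js(2) by simp_all
    then have "js ! k < nc" "js ! l < nc"
      using js(1) by auto
    moreover have "dim_row (A t) = nr" for t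
      using A[of t] by simp
    moreover have "col (A t) j $ p = A t $$ (p, j)" if "p < nr" for t j p
      using A[of t] that by (simp add: col_def)
    ultimately show "isCont (\<lambda>t. (transpose_mat (B t) * B t) $$ (k, l)) x"
      using A js(2) \<open>k < V.rank (A x)\<close> \<open>l < V.rank (A x)\<close>
      by (auto simp: B_def scalar_prod_def mat_of_cols_index intro!: continuous_intros cont)
  qed (use B in \<open>simp add: mult_carrier_mat[of _ _ nr]\<close>)
  then have "eventually (\<lambda>t. det (transpose_mat (B t) * B t) \<noteq> 0) (nhds x)"
    unfolding isCont_def eventually_nhds_conv_at using det tendsto_imp_eventually_ne by auto
  then show ?thesis
    by eventually_elim (use V.rank_ge_if_det_gram_nonzero[OF A B cols_sub] in auto)
qed


section \<open>Tensor-train products\<close>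

lemma partial_prod_cong:
  "(\<And>l. l \<in> {1..k} \<Longrightarrow> W l = W' l) \<Longrightarrow> partial_prod r W k i b = partial_prod r W' k i b"
  by (induction k arbitrary: b) (auto intro!: sum.cong)

lemma isCont_partial_prod:
  fixes C :: "nat \<Rightarrow> real \<Rightarrow> core"
  assumes "\<And>k a j b. isCont (\<lambda>t. C k t a j b) x"
  shows "isCont (\<lambda>t. partial_prod r (\<lambda>k. C k t) m i b) x"
  by (induction m arbitrary: b) (auto intro!: continuous_intros assms)

lemma partial_prod_has_derivative:
  fixes C :: "nat \<Rightarrow> real \<Rightarrow> core"
  assumes C0: "\<And>l. C l 0 = U l"
    and C': "\<And>l a j b. ((\<lambda>t. C l t a j b) has_real_derivative dV l a j b) (at 0)"
  shows "((\<lambda>t. partial_prod r (\<lambda>l. C l t) k i b) has_real_derivative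
            (\<Sum>l\<in>{1..k}. partial_prod r (U(l := dV l)) k i b)) (at 0)"
proof (induction k arbitrary: b)
  case (Suc k)
  let ?j = "i (Suc k)"
  have U: "(\<lambda>l. C l 0) = U" using C0 by blast
  have "((\<lambda>t. partial_prod r (\<lambda>l. C l t) (Suc k) i b) has_real_derivative
     (\<Sum>a<r k. (\<Sum>l\<in>{1..k}. partial_prod r (U(l := dV l)) k i a) * U (Suc k) a ?j b
               + dV (Suc k) a ?j b * partial_prod r U k i a)) (at 0)"
    unfolding partial_prod.simps
    using DERIV_mult[OF Suc.IH C'[of "Suc k"]] by (intro DERIV_sum) (simp only: C0 U)
  moreover have "(\<Sum>a<r k. (\<Sum>l\<in>{1..k}. partial_prod r (U(l := dV l)) k i a) * U (Suc k) a ?j b)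
      = (\<Sum>l\<in>{1..k}. partial_prod r (U(l := dV l)) (Suc k) i b)"
    by (simp add: sum_distrib_right) (rule sum.swap)
  moreover have "(\<Sum>a<r k. dV (Suc k) a ?j b * partial_prod r U k i a)
      = partial_prod r (U(Suc k := dV (Suc k))) (Suc k) i b"
    using partial_prod_cong[of k "U(Suc k := dV (Suc k))" U] by (simp add: mult.commute)
  ultimately show ?case by (simp only: sum.distrib sum.cl_ivl_Suc) simp
qed simp

fun partial_prod_from ::
  "(nat \<Rightarrow> nat) \<Rightarrow> (nat \<Rightarrow> core) \<Rightarrow> nat \<Rightarrow> nat \<Rightarrow> (nat \<Rightarrow> nat) \<Rightarrow> nat \<Rightarrow> nat \<Rightarrow> real" where
  "partial_prod_from r W \<mu> 0 i a b = unit_vec a b"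
| "partial_prod_from r W \<mu> (Suc m) i a b =
     (\<Sum>c<r (\<mu> + m). partial_prod_from r W \<mu> m i a c * W (Suc (\<mu> + m)) c (i (Suc (\<mu> + m))) b)"

lemma partial_prod_split:
  "b < r (\<mu> + m) \<Longrightarrow>
   partial_prod r W (\<mu> + m) i b =
     (\<Sum>a<r \<mu>. partial_prod r W \<mu> i a * partial_prod_from r W \<mu> m i a b)"
proof (induction m arbitrary: b)
  case (Suc m)
  have "partial_prod r W (\<mu> + Suc m) i b =
      (\<Sum>c<r (\<mu> + m). (\<Sum>a<r \<mu>. partial_prod r W \<mu> i a * partial_prod_from r W \<mu> m i a c) *
         W (Suc (\<mu> + m)) c (i (Suc (\<mu> + m))) b)"
    using Suc.IH by simp
  also have "\<dots> = (\<Sum>a<r \<mu>. partial_prod r W \<mu> i a * partial_prod_from r W \<mu> (Suc m) i a b)"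
    by (simp add: sum_distrib_left sum_distrib_right mult.assoc) (rule sum.swap)
  finally show ?case .
qed simp

lemma partial_prod_cong_index:
  "(\<And>k. k \<in> {1..m} \<Longrightarrow> i k = i' k) \<Longrightarrow> partial_prod r W m i b = partial_prod r W m i' b"
  by (induction m arbitrary: b) (auto intro!: sum.cong)

lemma partial_prod_from_cong_index:
  "(\<And>k. k \<in> {\<mu><..\<mu> + m} \<Longrightarrow> i k = i' k) \<Longrightarrow>
   partial_prod_from r W \<mu> m i a b = partial_prod_from r W \<mu> m i' a b"
  by (induction m arbitrary: b) (auto intro!: sum.cong)

lemma mat_rank_flattening_M_TT_le:
  assumes "1 \<le> \<mu>" "\<mu> < d" and "r d = 1"
  shows "mat_rank (flattening d n \<mu> (M_TT d r W)) \<le> r \<mu>"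
proof -
  define f where "f a p = partial_prod r W \<mu> (colex_index n \<mu> p 0) a" for a p
  define g where "g a q = partial_prod_from r W \<mu> (d - \<mu>) (colex_index n \<mu> 0 q) a 0" for a q
  have "M_TT d r W (colex_index n \<mu> p q) = (\<Sum>a<r \<mu>. f a p * g a q)" for p q
  proof -
    have "M_TT d r W (colex_index n \<mu> p q) = partial_prod r W (\<mu> + (d - \<mu>)) (colex_index n \<mu> p q) 0"
      using assms by (simp add: M_TT_def)
    also have "\<dots> = (\<Sum>a<r \<mu>. partial_prod r W \<mu> (colex_index n \<mu> p q) a *
        partial_prod_from r W \<mu> (d - \<mu>) (colex_index n \<mu> p q) a 0)"
      using assms by (intro partial_prod_split) simp
    also have "\<dots> = (\<Sum>a<r \<mu>. f a p * g a q)"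
      unfolding f_def g_def
      by (intro sum.cong refl arg_cong2[where f = "(*)"] partial_prod_cong_index
          partial_prod_from_cong_index) (auto simp: colex_index_def)
    finally show ?thesis .
  qed
  then have "flattening d n \<mu> (M_TT d r W) =
      mat (\<Prod>j\<in>{1..\<mu>}. n j) (\<Prod>j\<in>{\<mu>+1..d}. n j) (\<lambda>(p, q). \<Sum>a<r \<mu>. f a p * g a q)"
    unfolding flattening_def by (intro eq_matI) auto
  then show ?thesis unfolding mat_rank_def using rank_sum_of_products_le by simp
qed

lemma eventually_has_TT_rank:
  fixes C :: "nat \<Rightarrow> real \<Rightarrow> core"
  assumes "r d = 1" and cont: "\<And>k a j b. isCont (\<lambda>t. C k t a j b) x"
    and rank: "has_TT_rank d n r (M_TT d r (\<lambda>k. C k x))"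
  shows "eventually (\<lambda>t. has_TT_rank d n r (M_TT d r (\<lambda>k. C k t))) (nhds x)"
proof -
  have "eventually (\<lambda>t. mat_rank (flattening d n \<mu> (M_TT d r (\<lambda>k. C k t))) = r \<mu>) (nhds x)"
    if \<mu>: "\<mu> \<in> {1..<d}" for \<mu>
  proof -
    define A where "A t = flattening d n \<mu> (M_TT d r (\<lambda>k. C k t))" for t
    have A: "A t \<in> carrier_mat (\<Prod>j\<in>{1..\<mu>}. n j) (\<Prod>j\<in>{\<mu>+1..d}. n j)" for t
      by (simp add: A_def flattening_def)
    have "isCont (\<lambda>t. A t $$ (p, q)) x"
      if "p < (\<Prod>j\<in>{1..\<mu>}. n j)" "q < (\<Prod>j\<in>{\<mu>+1..d}. n j)" for p q
      using that cont by (simp add: A_def flattening_def M_TT_def isCont_partial_prod)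
    then have "eventually (\<lambda>t. vec_space.rank (\<Prod>j\<in>{1..\<mu>}. n j) (A x) \<le>
        vec_space.rank (\<Prod>j\<in>{1..\<mu>}. n j) (A t)) (nhds x)"
      by (rule eventually_rank_ge[of A, OF A])
    moreover have "mat_rank (A t) = vec_space.rank (\<Prod>j\<in>{1..\<mu>}. n j) (A t)" for t
      using A[of t] by (simp add: mat_rank_def)
    ultimately have "eventually (\<lambda>t. mat_rank (A x) \<le> mat_rank (A t)) (nhds x)"
      by simp
    moreover have "mat_rank (A x) = r \<mu>"
      using rank \<mu> by (simp add: A_def has_TT_rank_def)
    moreover have "mat_rank (A t) \<le> r \<mu>" for t
      unfolding A_def using \<mu> assms(1) by (intro mat_rank_flattening_M_TT_le) auto
    ultimately show ?thesis
      unfolding A_def by (simp add: eventually_mono order_antisym)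
  qed
  then show ?thesis
    unfolding has_TT_rank_def by (simp add: eventually_ball_finite)
qed


definition TT_curve ::
  "nat \<Rightarrow> (nat \<Rightarrow> nat) \<Rightarrow> (nat \<Rightarrow> nat) \<Rightarrow> (nat \<Rightarrow> core) \<Rightarrow> (nat \<Rightarrow> core) \<Rightarrow> nat \<Rightarrow> real \<Rightarrow> core"
  where "TT_curve d n r U dV k =
    (if k \<in> {1..<d} then orth_core_curve (r (k - 1)) (n k) (r k) (U k) (dV k)
     else (\<lambda>t a i b. U k a i b + t * dV k a i b))"

lemma TT_curve_0: "TT_curve d n r U dV k 0 = U k"
  by (simp add: TT_curve_def orth_core_curve_0)

lemma smooth_TT_curve: "smooth (\<lambda>t. TT_curve d n r U dV k t a i b)"
  by (simp add: TT_curve_def smooth_orth_core_curve smooth_add smooth_mult)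

lemma TT_curve_has_derivative:
  "((\<lambda>t. TT_curve d n r U dV k t a i b) has_real_derivative dV k a i b) (at 0)"
  by (auto simp: TT_curve_def orth_core_curve_has_derivative intro!: derivative_eq_intros)

lemma left_orthogonal_TT_curve:
  assumes "left_orthogonal d n r U" and "\<forall>k\<in>{1..<d}. gauge_core n r k (dV k) (U k)"
  shows "left_orthogonal d n r (\<lambda>k. TT_curve d n r U dV k t)"
  unfolding left_orthogonal_def left_orth_core_def
proof (intro ballI allI impI)
  fix k b b' assume "k \<in> {1..<d}" "b < r k" "b' < r k"
  moreover have "\<forall>a<r k. \<forall>b<r k. core_gram (r (k - 1)) (n k) (U k) a b = unit_vec a b"
    using assms(1) \<open>k \<in> {1..<d}\<close>
    by (auto simp: left_orthogonal_def left_orth_core_def core_gram_def unit_vec_def)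
  ultimately show "(\<Sum>a<r (k - 1). \<Sum>i<n k.
      TT_curve d n r U dV k t a i b * TT_curve d n r U dV k t a i b') = (if b = b' then 1 else 0)"
    using core_gram_orth_core_curve[of "r k" "r (k - 1)" "n k" "U k" "dV k" b b' t] assms(2)
    by (auto simp: TT_curve_def gauge_core_def core_gram_def unit_vec_def)
qed

lemma TT_curve_bigo:
  "k \<in> {1..<d} \<Longrightarrow>
   (\<lambda>t. TT_curve d n r U dV k t a i b - U k a i b - t * dV k a i b) \<in> O[at 0](\<lambda>t. t\<^sup>2)"
  by (simp add: TT_curve_def orth_core_curve_bigo)

lemma M_TT_TT_curve_has_derivative:
  "((\<lambda>t. M_TT d r (\<lambda>k. TT_curve d n r U dV k t) i) has_real_derivative TT_tangent d r U dV i)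
     (at 0)"
  unfolding M_TT_def TT_tangent_def
  by (intro partial_prod_has_derivative TT_curve_0 TT_curve_has_derivative)

lemma eventually_has_TT_rank_TT_curve:
  "r d = 1 \<Longrightarrow> has_TT_rank d n r (M_TT d r U) \<Longrightarrow>
   eventually (\<lambda>t. has_TT_rank d n r (M_TT d r (\<lambda>k. TT_curve d n r U dV k t))) (nhds 0)"
  by (intro eventually_has_TT_rank smooth_isCont smooth_TT_curve) (simp_all add: TT_curve_0)

theorem lemma14:
  fixes d :: nat and n r :: "nat \<Rightarrow> nat" and U dV :: "nat \<Rightarrow> core" and X V :: tensor
  assumes d: "d \<ge> 2"
    and n_pos: "\<forall>k\<in>{1..d}. n k > 0"
    and r0: "r 0 = 1" and rd: "r d = 1"
    and X_def: "X = M_TT d r U"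
    and X_in: "X \<in> TT_manifold d n r"
    and U_min: "minimal_TT d n r U"
    and U_lo: "left_orthogonal d n r U"
    and gauge: "\<forall>k\<in>{1..<d}. gauge_core n r k (dV k) (U k)"
    and V_def: "V = TT_tangent d r U dV"
  shows "\<exists>\<epsilon>>0. \<exists>c :: nat \<Rightarrow> real \<Rightarrow> core.
     (\<forall>k\<in>{1..d}. smooth_core_curve n r k {-\<epsilon><..<\<epsilon>} (c k))
   \<and> (\<forall>k\<in>{1..<d}. \<forall>a<r (k-1). \<forall>i<n k. \<forall>b<r k.
        (\<lambda>t. c k t a i b - U k a i b - t * dV k a i b) \<in> O[at 0](\<lambda>t. t\<^sup>2))
   \<and> (\<forall>t\<in>{-\<epsilon><..<\<epsilon>}. \<forall>a<r (d-1). \<forall>i<n d. \<forall>b<r d.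
        c d t a i b = U d a i b + t * dV d a i b)
   \<and> (\<forall>i. valid_index d n i \<longrightarrow> M_TT d r (\<lambda>k. c k 0) i = X i)
   \<and> (\<forall>i. valid_index d n i \<longrightarrow>
        ((\<lambda>t. M_TT d r (\<lambda>k. c k t) i) has_real_derivative V i) (at 0))
   \<and> (\<forall>t\<in>{-\<epsilon><..<\<epsilon>}.
        minimal_TT d n r (\<lambda>k. c k t) \<and> left_orthogonal d n r (\<lambda>k. c k t)
      \<and> M_TT d r (\<lambda>k. c k t) \<in> TT_manifold d n r)"
proof -
  let ?c = "TT_curve d n r U dV"
  have "eventually (\<lambda>t. has_TT_rank d n r (M_TT d r (\<lambda>k. ?c k t))) (nhds 0)"
    using X_in X_def by (intro eventually_has_TT_rank_TT_curve rd) (simp add: TT_manifold_def)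
  then obtain \<epsilon> where "\<epsilon> > 0"
    and rank: "\<And>t. \<bar>t\<bar> < \<epsilon> \<Longrightarrow> has_TT_rank d n r (M_TT d r (\<lambda>k. ?c k t))"
    unfolding eventually_nhds_metric dist_real_def by auto
  show ?thesis
  proof (intro exI[of _ \<epsilon>] exI[of _ ?c] conjI ballI allI impI)
    show "smooth_core_curve n r k {-\<epsilon><..<\<epsilon>} (?c k)" for k
      by (simp add: smooth_core_curve_def smooth_TT_curve smooth_imp_smooth_on_real)
    show "(\<lambda>t. ?c k t a i b - U k a i b - t * dV k a i b) \<in> O[at 0](\<lambda>t. t\<^sup>2)"
      if "k \<in> {1..<d}" for k a i b
      using that by (rule TT_curve_bigo)
    show "?c d t a i b = U d a i b + t * dV d a i b" for t a i b
      by (simp add: TT_curve_def)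
    show "M_TT d r (\<lambda>k. ?c k 0) i = X i" for i
      using X_def by (simp add: TT_curve_0)
    show "((\<lambda>t. M_TT d r (\<lambda>k. ?c k t) i) has_real_derivative V i) (at 0)" for i
      unfolding V_def by (rule M_TT_TT_curve_has_derivative)
    show "left_orthogonal d n r (\<lambda>k. ?c k t)" for t
      using U_lo gauge by (rule left_orthogonal_TT_curve)
    show "minimal_TT d n r (\<lambda>k. ?c k t)" "M_TT d r (\<lambda>k. ?c k t) \<in> TT_manifold d n r"
      if "t \<in> {-\<epsilon><..<\<epsilon>}" for t
      using rank that by (auto simp: minimal_TT_def TT_manifold_def)
  qed (rule \<open>\<epsilon> > 0\<close>)
qed

end
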